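(* Every Boolean self-join-free conjunctive query that has exactly two minimal query plans is linear, i.e., contains no triad.
   Context: Let $Q=\exists\vec x\,(R_1(\vec x_1)\wedge\cdots\wedge R_m(\vec x_m))$ be a Boolean self-join-free conjunctive query. $Q$ is hierarchical if for any two variables $x,y$, with $\mathrm{at}(x)$ the set of atoms containing $x$, $\mathrm{at}(x)\subseteq\mathrm{at}(y)$, $\mathrm{at}(x)\supseteq\mathrm{at}(y)$ or $\mathrm{at}(x)\cap\mathrm{at}(y)=\emptyset$. A dissociation is $\Delta=(\vec y_1,\dots,\vec y_m)$ with $\vec y_i\subseteq\mathrm{var}(Q)\setminus\vec x_i$; $Q^\Delta$ has atoms $R_i^{\vec y_i}(\vec x_i,\vec y_i)$; $\Delta$ is hierarchical if $Q^\Delta$ is. Order dissociations by $\Delta\preceq\Delta'$ iff $\vec y_i\subseteq\vec y'_i$ for all $i$. The minimal query plans of $Q$ correspond one-to-one to the minimal hierarchical dissociations. An atom is independent if no other atom has a variable set that is a strict subset of its variable set. A path between atoms $R_1,R_p$ is an alternating sequence $R_1-\vec y_1-R_2-\cdots-\vec y_{p-1}-R_p$ with consecutive atoms sharing the nonempty variable sets $\vec y_i$. A triad is a set of three independent atoms $\{R_1,R_2,R_3\}$ such that for each pair $i\ne j$ there is a path from $R_i$ to $R_j$ using no variable of the third atom. $Q$ is linear if it has no triad. *)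

theory Defs
  imports Main
begin

text \<open>A Boolean self-join-free conjunctive query with m atoms is represented by
  the variable sets X 0, ..., X (m-1) of its atoms R_1,...,R_m (indices i < m).
  Since the query is self-join-free, every atom has its own relation symbol,
  so the atom is identified with its index.\<close>

definition qvars :: "nat \<Rightarrow> (nat \<Rightarrow> 'v set) \<Rightarrow> 'v set" where
  "qvars m X = (\<Union>i<m. X i)"

definition atoms_of :: "nat \<Rightarrow> (nat \<Rightarrow> 'v set) \<Rightarrow> 'v \<Rightarrow> nat set" where
  "atoms_of m X x = {i. i < m \<and> x \<in> X i}"

definition hierarchical :: "nat \<Rightarrow> (nat \<Rightarrow> 'v set) \<Rightarrow> bool" where
  "hierarchical m X \<longleftrightarrow>
     (\<forall>x\<in>qvars m X. \<forall>y\<in>qvars m X.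
        atoms_of m X x \<subseteq> atoms_of m X y \<or> atoms_of m X y \<subseteq> atoms_of m X x \<or>
        atoms_of m X x \<inter> atoms_of m X y = {})"

definition dissociation :: "nat \<Rightarrow> (nat \<Rightarrow> 'v set) \<Rightarrow> (nat \<Rightarrow> 'v set) \<Rightarrow> bool" where
  "dissociation m X Y \<longleftrightarrow>
     (\<forall>i<m. Y i \<subseteq> qvars m X - X i) \<and> (\<forall>i\<ge>m. Y i = {})"

definition dissociated :: "(nat \<Rightarrow> 'v set) \<Rightarrow> (nat \<Rightarrow> 'v set) \<Rightarrow> (nat \<Rightarrow> 'v set)" where
  "dissociated X Y = (\<lambda>i. X i \<union> Y i)"

definition hier_dissociation :: "nat \<Rightarrow> (nat \<Rightarrow> 'v set) \<Rightarrow> (nat \<Rightarrow> 'v set) \<Rightarrow> bool" where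
  "hier_dissociation m X Y \<longleftrightarrow> dissociation m X Y \<and> hierarchical m (dissociated X Y)"

definition diss_le :: "nat \<Rightarrow> (nat \<Rightarrow> 'v set) \<Rightarrow> (nat \<Rightarrow> 'v set) \<Rightarrow> bool" where
  "diss_le m Y Y' \<longleftrightarrow> (\<forall>i<m. Y i \<subseteq> Y' i)"

definition minimal_hier_dissociation :: "nat \<Rightarrow> (nat \<Rightarrow> 'v set) \<Rightarrow> (nat \<Rightarrow> 'v set) \<Rightarrow> bool" where
  "minimal_hier_dissociation m X Y \<longleftrightarrow>
     hier_dissociation m X Y \<and>
     (\<forall>Y'. hier_dissociation m X Y' \<and> diss_le m Y' Y \<longrightarrow> Y' = Y)"

definition independent_atom :: "nat \<Rightarrow> (nat \<Rightarrow> 'v set) \<Rightarrow> nat \<Rightarrow> bool" where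
  "independent_atom m X i \<longleftrightarrow> i < m \<and> \<not> (\<exists>j<m. j \<noteq> i \<and> X j \<subset> X i)"

text \<open>A path R_{a 0} - ys 0 - R_{a 1} - ... - ys (p-2) - R_{a (p-1)} from atom i to atom j
  in which the shared variable sets avoid the variable set Z.\<close>
definition path_avoiding :: "nat \<Rightarrow> (nat \<Rightarrow> 'v set) \<Rightarrow> 'v set \<Rightarrow> nat \<Rightarrow> nat \<Rightarrow> bool" where
  "path_avoiding m X Z i j \<longleftrightarrow>
     (\<exists>(p::nat) (a::nat \<Rightarrow> nat) (ys::nat \<Rightarrow> 'v set).
        p \<ge> 2 \<and> a 0 = i \<and> a (p - 1) = j \<and> (\<forall>k<p. a k < m) \<and>
        (\<forall>k. Suc k < p \<longrightarrow>
           ys k \<noteq> {} \<and> ys k \<subseteq> X (a k) \<inter> X (a (Suc k)) \<and> ys k \<inter> Z = {}))"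

definition triad :: "nat \<Rightarrow> (nat \<Rightarrow> 'v set) \<Rightarrow> nat \<Rightarrow> nat \<Rightarrow> nat \<Rightarrow> bool" where
  "triad m X r1 r2 r3 \<longleftrightarrow>
     r1 \<noteq> r2 \<and> r2 \<noteq> r3 \<and> r1 \<noteq> r3 \<and>
     independent_atom m X r1 \<and> independent_atom m X r2 \<and> independent_atom m X r3 \<and>
     path_avoiding m X (X r3) r1 r2 \<and>
     path_avoiding m X (X r1) r2 r3 \<and>
     path_avoiding m X (X r2) r1 r3"

definition linear_query :: "nat \<Rightarrow> (nat \<Rightarrow> 'v set) \<Rightarrow> bool" where
  "linear_query m X \<longleftrightarrow> \<not> (\<exists>r1 r2 r3. triad m X r1 r2 r3)"

end

theory Submission
  imports Defs
begin

text \<open>For every atom r, dissociating all other atoms to all variables of Q gives a hierarchical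
  query, so some minimal hierarchical dissociation leaves r undissociated. On the other hand no
  hierarchical dissociation can leave two atoms a, b of a triad {a, b, c} undissociated: in a
  hierarchical query a path of atoms has a variable common to all its atoms, so the path from b
  to c avoiding the variables of a yields a variable of b and c outside a, and symmetrically a
  variable of a and c outside b; these two variables share the atom c but have incomparable
  atom sets. Hence a triad forces three distinct minimal plans.\<close>

lemma hierarchical_atoms_of_nested:
  assumes "hierarchical m D" and "c < m" and "x \<in> D c" and "y \<in> D c"
  shows "atoms_of m D x \<subseteq> atoms_of m D y \<or> atoms_of m D y \<subseteq> atoms_of m D x"
proof -
  have "x \<in> qvars m D" "y \<in> qvars m D"
    using assms(2-4) unfolding qvars_def by auto
  moreover have "c \<in> atoms_of m D x \<inter> atoms_of m D y"
    using assms(2-4) unfolding atoms_of_def by auto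
  ultimately show ?thesis
    using assms(1) unfolding hierarchical_def by blast
qed

lemma hierarchical_no_crossing_vars:
  assumes "hierarchical m D" and "a < m" and "b < m" and "c < m"
    and "v \<in> D b" "v \<in> D c" "v \<notin> D a"
    and "w \<in> D a" "w \<in> D c" "w \<notin> D b"
  shows False
proof -
  have "a \<in> atoms_of m D w - atoms_of m D v" "b \<in> atoms_of m D v - atoms_of m D w"
    using assms unfolding atoms_of_def by auto
  then show False
    using hierarchical_atoms_of_nested[OF assms(1,4,6,9)] by blast
qed

lemma hierarchical_chain_common_var:
  assumes "hierarchical m D" and "\<forall>l\<le>Suc n. a l < m"
    and "\<forall>k\<le>n. vs k \<in> D (a k) \<and> vs k \<in> D (a (Suc k))"
  shows "\<exists>k\<le>n. \<forall>l\<le>Suc n. vs k \<in> D (a l)"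
  using assms(2,3)
proof (induction n)
  case 0
  then show ?case by (auto simp: le_Suc_eq)
next
  case (Suc n)
  then obtain k where k: "k \<le> n" "\<forall>l\<le>Suc n. vs k \<in> D (a l)" by auto
  have am: "a (Suc n) < m" "a (Suc (Suc n)) < m" using Suc.prems(1) by auto
  have new: "vs (Suc n) \<in> D (a (Suc n))" "vs (Suc n) \<in> D (a (Suc (Suc n)))"
    using Suc.prems(2) by auto
  from hierarchical_atoms_of_nested[OF assms(1) am(1) _ new(1), of "vs k"] k
  consider "atoms_of m D (vs k) \<subseteq> atoms_of m D (vs (Suc n))"
    | "atoms_of m D (vs (Suc n)) \<subseteq> atoms_of m D (vs k)" by auto
  then show ?case
  proof cases
    case 1
    have "vs (Suc n) \<in> D (a l)" if "l \<le> Suc n" for l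
    proof -
      have "a l \<in> atoms_of m D (vs k)" using k(2) that Suc.prems(1) unfolding atoms_of_def by simp
      then show ?thesis using 1 unfolding atoms_of_def by blast
    qed
    then show ?thesis using new(2) by (auto simp: le_Suc_eq)
  next
    case 2
    have "vs k \<in> D (a (Suc (Suc n)))"
      using 2 new(2) am(2) unfolding atoms_of_def by auto
    then show ?thesis using k by (auto simp: le_Suc_eq)
  qed
qed

lemma path_avoiding_common_var:
  assumes "hierarchical m D" and "\<forall>i<m. X i \<subseteq> D i"
    and "path_avoiding m X Z i j"
  shows "\<exists>v. v \<in> D i \<and> v \<in> D j \<and> v \<notin> Z \<and> i < m \<and> j < m"
proof -
  obtain p a ys where P: "p \<ge> 2" "a 0 = i" "a (p - 1) = j" "\<forall>k<p. a k < m"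
    "\<forall>k. Suc k < p \<longrightarrow> ys k \<noteq> {} \<and> ys k \<subseteq> X (a k) \<inter> X (a (Suc k)) \<and> ys k \<inter> Z = {}"
    using assms(3) unfolding path_avoiding_def by blast
  obtain n where n: "p = Suc (Suc n)" using P(1) by (metis add_2_eq_Suc le_Suc_ex)
  define vs where "vs k = (SOME v. v \<in> ys k)" for k
  have vs: "vs k \<in> ys k" if "k \<le> n" for k
    unfolding vs_def using P(5) n that by (metis Suc_le_mono less_Suc_eq_le some_in_eq)
  have am: "\<forall>l\<le>Suc n. a l < m" using P(4) n by auto
  have "\<forall>k\<le>n. vs k \<in> D (a k) \<and> vs k \<in> D (a (Suc k))"
    using vs P(5) n am assms(2) by (metis IntE Suc_le_mono le_SucI less_Suc_eq_le subsetD)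
  from hierarchical_chain_common_var[OF assms(1) am this]
  obtain k where k: "k \<le> n" "\<forall>l\<le>Suc n. vs k \<in> D (a l)" by blast
  have "ys k \<inter> Z = {}" using P(5) n k(1) by simp
  then have "vs k \<notin> Z" using vs[OF k(1)] by blast
  moreover have "vs k \<in> D i" "vs k \<in> D j" using k P(2,3) n by auto
  moreover have "i < m" "j < m" using am P(2,3) n by auto
  ultimately show ?thesis by blast
qed

lemma hier_dissociation_not_two_undissociated:
  assumes "hier_dissociation m X Y"
    and "path_avoiding m X (X a) b c \<or> path_avoiding m X (X a) c b"
    and "path_avoiding m X (X b) a c \<or> path_avoiding m X (X b) c a"
    and "Y a = {}" and "Y b = {}"
  shows False
proof -
  let ?D = "dissociated X Y"
  have h: "hierarchical m ?D" using assms(1) unfolding hier_dissociation_def by simp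
  have sub: "\<forall>i<m. X i \<subseteq> ?D i" unfolding dissociated_def by auto
  obtain v where v: "v \<in> ?D b" "v \<in> ?D c" "v \<notin> X a" "b < m" "c < m"
    using assms(2) path_avoiding_common_var[OF h sub, of "X a" b c]
      path_avoiding_common_var[OF h sub, of "X a" c b] by blast
  obtain w where w: "w \<in> ?D a" "w \<in> ?D c" "w \<notin> X b" "a < m"
    using assms(3) path_avoiding_common_var[OF h sub, of "X b" a c]
      path_avoiding_common_var[OF h sub, of "X b" c a] by blast
  have "?D a = X a" "?D b = X b" using assms(4,5) unfolding dissociated_def by auto
  then show False
    using hierarchical_no_crossing_vars[OF h w(4) v(4) v(5) v(1,2) _ w(1,2)] v w by simp
qed

definition dissociate_all_but :: "nat \<Rightarrow> (nat \<Rightarrow> 'v set) \<Rightarrow> nat \<Rightarrow> nat \<Rightarrow> 'v set" where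
  "dissociate_all_but m X r = (\<lambda>j. if j < m \<and> j \<noteq> r then qvars m X - X j else {})"

lemma hier_dissociation_dissociate_all_but:
  assumes "r < m"
  shows "hier_dissociation m X (dissociate_all_but m X r)"
proof -
  let ?D = "dissociated X (dissociate_all_but m X r)"
  have X_sub: "X j \<subseteq> qvars m X" if "j < m" for j
    using that unfolding qvars_def by auto
  have "dissociation m X (dissociate_all_but m X r)"
    unfolding dissociation_def dissociate_all_but_def by auto
  moreover have "qvars m ?D \<subseteq> qvars m X"
    unfolding qvars_def dissociated_def dissociate_all_but_def by (auto split: if_splits)
  moreover have "atoms_of m ?D x = {j. j < m \<and> j \<noteq> r} \<union> {j. j = r \<and> x \<in> X r}"
    if "x \<in> qvars m X" for x
    using assms X_sub that unfolding atoms_of_def dissociated_def dissociate_all_but_def by auto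
  ultimately have "hierarchical m ?D"
    unfolding hierarchical_def by (smt (verit) Un_iff mem_Collect_eq subsetD subsetI)
  with \<open>dissociation m X (dissociate_all_but m X r)\<close> show ?thesis
    unfolding hier_dissociation_def by simp
qed

lemma minimal_hier_dissociation_below:
  assumes "\<forall>i<m. finite (X i)" and "hier_dissociation m X F"
  shows "\<exists>M. minimal_hier_dissociation m X M \<and> diss_le m M F"
proof -
  let ?P = "\<lambda>Y. hier_dissociation m X Y \<and> diss_le m Y F"
  let ?size = "\<lambda>Y. \<Sum>j<m. card (Y j)"
  have "?P F" using assms(2) unfolding diss_le_def by auto
  from ex_has_least_nat[of ?P F ?size, OF this] obtain M
    where M: "?P M" "\<forall>Y. ?P Y \<longrightarrow> ?size M \<le> ?size Y" by blast
  have "finite (qvars m X)" using assms(1) unfolding qvars_def by auto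
  then have finM: "finite (M j)" if "j < m" for j
    using M(1) that unfolding hier_dissociation_def dissociation_def
    by (meson Diff_subset finite_subset subset_trans)
  have "Y' = M" if Y': "hier_dissociation m X Y'" "diss_le m Y' M" for Y'
  proof -
    have sub: "\<forall>j<m. Y' j \<subseteq> M j" using Y'(2) unfolding diss_le_def by auto
    have "?size M \<le> ?size Y'"
      using M Y' unfolding diss_le_def by (meson order_trans)
    then have eq: "Y' j = M j" if "j < m" for j
      using sub finM that sum_strict_mono_ex1[of "{..<m}" "\<lambda>i. card (Y' i)" "\<lambda>i. card (M i)"]
      by (metis card_mono card_seteq finite_lessThan lessThan_iff not_le)
    have "Y' j = {} \<and> M j = {}" if "j \<ge> m" for j
      using Y'(1) M(1) that unfolding hier_dissociation_def dissociation_def by auto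
    then show "Y' = M" using eq by (metis ext not_le)
  qed
  then show ?thesis using M(1) unfolding minimal_hier_dissociation_def by blast
qed

lemma minimal_hier_dissociation_undissociated_atom:
  assumes "\<forall>i<m. finite (X i)" and "r < m"
  obtains M where "minimal_hier_dissociation m X M" and "M r = {}"
proof -
  obtain M where "minimal_hier_dissociation m X M" "diss_le m M (dissociate_all_but m X r)"
    using minimal_hier_dissociation_below[OF assms(1)
        hier_dissociation_dissociate_all_but[OF assms(2)]] by blast
  moreover from this(2) have "M r = {}"
    using assms(2) unfolding diss_le_def dissociate_all_but_def by auto
  ultimately show ?thesis using that by blast
qed

theorem mainTheorem10:
  fixes m :: nat and X :: "nat \<Rightarrow> 'v set"
  assumes "\<forall>i<m. finite (X i)"
    and "card {Y. minimal_hier_dissociation m X Y} = 2"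
  shows "linear_query m X"
proof (rule ccontr)
  assume "\<not> linear_query m X"
  then obtain r1 r2 r3 where "triad m X r1 r2 r3" unfolding linear_query_def by blast
  then have r: "r1 < m" "r2 < m" "r3 < m"
    and p12: "path_avoiding m X (X r3) r1 r2"
    and p23: "path_avoiding m X (X r1) r2 r3"
    and p13: "path_avoiding m X (X r2) r1 r3"
    unfolding triad_def independent_atom_def by auto
  obtain M1 where M1: "minimal_hier_dissociation m X M1" "M1 r1 = {}"
    using minimal_hier_dissociation_undissociated_atom[OF assms(1) r(1)] .
  obtain M2 where M2: "minimal_hier_dissociation m X M2" "M2 r2 = {}"
    using minimal_hier_dissociation_undissociated_atom[OF assms(1) r(2)] .
  obtain M3 where M3: "minimal_hier_dissociation m X M3" "M3 r3 = {}"
    using minimal_hier_dissociation_undissociated_atom[OF assms(1) r(3)] .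
  have "M1 \<noteq> M2" "M2 \<noteq> M3" "M1 \<noteq> M3"
    using hier_dissociation_not_two_undissociated[of m X M1 r1 r2 r3]
      hier_dissociation_not_two_undissociated[of m X M2 r2 r3 r1]
      hier_dissociation_not_two_undissociated[of m X M1 r1 r3 r2]
      M1 M2 M3 p12 p23 p13 unfolding minimal_hier_dissociation_def by auto
  then have "card {M1, M2, M3} = 3" by simp
  moreover have "finite {Y. minimal_hier_dissociation m X Y}"
    using assms(2) card.infinite by fastforce
  ultimately have "3 \<le> card {Y. minimal_hier_dissociation m X Y}"
    using M1 M2 M3 card_mono[of _ "{M1, M2, M3}"] by (metis empty_subsetI insert_subset mem_Collect_eq)
  then show False using assms(2) by simp
qed

end
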